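(* Points $A,B,C,D\in I^3$ are consecutive vertices of a convex quadrilateral not lying in an isotropic plane if and only if the planes $A^*,B^*,C^*,D^*$ contain consecutive flat angles of an admissible convex 4-hedral angle.
   Context: $I^3$ is $\mathbb{R}^3$ with coordinates $(x,y,z)$; a line or plane is isotropic if parallel to the $z$-axis. Metric duality: a point $P=(P^1,P^2,P^3)$ corresponds to the plane $P^*\colon z=P^1x+P^2y-P^3$. Given a convex quadrilateral in a plane and a point $O$ not in the plane, the union of all rays from $O$ meeting the quadrilateral is a convex 4-hedral angle with vertex $O$; the union of rays from $O$ meeting one side of the quadrilateral is a flat angle; the four flat angles are consecutive in the order of the sides. The 4-hedral angle is admissible if the isotropic line through $O$ meets its interior. *)

theory Defs
  imports "HOL-Analysis.Analysis"
begin

text \<open>The space I^3 is modelled as real^3, coordinates x = X$1, y = X$2, z = X$3.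
  The isotropic direction is the z-axis, axis 3 1.\<close>

definition isotropic_dir :: "real^3" where
  "isotropic_dir = axis 3 1"

definition isotropic_plane :: "(real^3) set \<Rightarrow> bool" where
  "isotropic_plane S \<longleftrightarrow> affine S \<and> aff_dim S = 2 \<and>
     (\<forall>x\<in>S. \<forall>t::real. x + t *\<^sub>R isotropic_dir \<in> S)"

definition isotropic_line :: "real^3 \<Rightarrow> (real^3) set" where
  "isotropic_line V = {V + t *\<^sub>R isotropic_dir | t. True}"

definition dual_plane :: "real^3 \<Rightarrow> (real^3) set" where
  "dual_plane P = {X. X$3 = P$1 * X$1 + P$2 * X$2 - P$3}"

definition convex_quadrilateral :: "real^3 \<Rightarrow> real^3 \<Rightarrow> real^3 \<Rightarrow> real^3 \<Rightarrow> bool" where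
  "convex_quadrilateral A B C D \<longleftrightarrow>
     distinct [A, B, C, D] \<and> aff_dim {A, B, C, D} = 2 \<and>
     (\<forall>P\<in>{A, B, C, D}. P extreme_point_of (convex hull {A, B, C, D})) \<and>
     closed_segment A B face_of (convex hull {A, B, C, D}) \<and>
     closed_segment B C face_of (convex hull {A, B, C, D}) \<and>
     closed_segment C D face_of (convex hull {A, B, C, D}) \<and>
     closed_segment D A face_of (convex hull {A, B, C, D})"

definition ray_cone :: "real^3 \<Rightarrow> (real^3) set \<Rightarrow> (real^3) set" where
  "ray_cone V S = {V + t *\<^sub>R (q - V) | t q. 0 \<le> t \<and> q \<in> S}"

text \<open>Convex 4-hedral angle with vertex V over the quadrilateral Q1 Q2 Q3 Q4
  (the latter assumed convex and V not in its plane).\<close>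
definition hedral_angle4 :: "real^3 \<Rightarrow> real^3 \<Rightarrow> real^3 \<Rightarrow> real^3 \<Rightarrow> real^3 \<Rightarrow> (real^3) set" where
  "hedral_angle4 V Q1 Q2 Q3 Q4 = ray_cone V (convex hull {Q1, Q2, Q3, Q4})"

definition flat_angle :: "real^3 \<Rightarrow> real^3 \<Rightarrow> real^3 \<Rightarrow> (real^3) set" where
  "flat_angle V P Q = ray_cone V (closed_segment P Q)"

definition admissible :: "real^3 \<Rightarrow> (real^3) set \<Rightarrow> bool" where
  "admissible V K \<longleftrightarrow> isotropic_line V \<inter> interior K \<noteq> {}"

end

theory Submission
  imports Defs "HOL-Analysis.Cross3"
begin

(* Write dual_normal P = (P1, P2, -1), so that the dual plane P* is
   {X. dual_normal P . X = P3} and every dual normal has inner product -1 with the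
   isotropic direction E.

   For non-collinear A, B, C, the points A, B, C, D are consecutive vertices of a convex
   quadrilateral iff D = A + q (B - A) + r (C - A) with q < 0 < r and q + r < 1.  Their
   plane is not isotropic iff the dual normals a, b, c of A, B, C are linearly
   independent, and then the dual normal d of D is the same affine combination of a, b, c.

   The edges e_i = Q_i - V of a 4-hedral angle over a convex quadrilateral satisfy a
   linear relation with the same sign pattern, and hence so do its facet normals
   e_i x e_(i+1).  If the flat angles lie in A*, B*, C*, D*, then a, b, c, d are multiples
   of these facet normals; admissibility puts E inside the angle, which makes the four
   multipliers of one sign, and d . E = -1 turns the linear relation among a, b, c, d into
   the affine one.  Conversely, V is the common point of the dual planes and the edges are
   the cross products of consecutive dual normals. *)

unbundle cross3_syntax

section \<open>Vector algebra in three dimensions\<close>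

lemma cross_diff_eq_0_iff_collinear:
  fixes A B C :: "real^3"
  shows "(B - A) \<times> (C - A) = 0 \<longleftrightarrow> collinear {A, B, C}"
proof -
  have "collinear {A, B, C} \<longleftrightarrow> collinear {B, A, C}" by (simp add: insert_commute)
  also have "\<dots> \<longleftrightarrow> collinear {0, B - A, C - A}" by (rule collinear_3) simp
  finally show ?thesis by (simp add: cross_eq_0)
qed

lemma scaleR_triple_eq_sum_cross:
  fixes w e1 e2 e3 :: "real^3"
  shows "(e1 \<bullet> (e2 \<times> e3)) *\<^sub>R w = (w \<bullet> e1) *\<^sub>R (e2 \<times> e3) + (w \<bullet> e2) *\<^sub>R (e3 \<times> e1) + (w \<bullet> e3) *\<^sub>R (e1 \<times> e2)"
  by (simp add: vec_eq_iff forall_3 inner_vec_def sum_3 cross_components algebra_simps)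

lemma scaleR_triple_eq_sum:
  fixes w e1 e2 e3 :: "real^3"
  shows "(e1 \<bullet> (e2 \<times> e3)) *\<^sub>R w = (w \<bullet> (e2 \<times> e3)) *\<^sub>R e1 + (w \<bullet> (e3 \<times> e1)) *\<^sub>R e2 + (w \<bullet> (e1 \<times> e2)) *\<^sub>R e3"
  by (simp add: vec_eq_iff forall_3 inner_vec_def sum_3 cross_components algebra_simps)

lemma inner_cross_cyclic:
  fixes e1 e2 e3 :: "real^3"
  shows "e2 \<bullet> (e3 \<times> e1) = e1 \<bullet> (e2 \<times> e3)" "e3 \<bullet> (e1 \<times> e2) = e1 \<bullet> (e2 \<times> e3)"
  by (simp_all add: inner_vec_def sum_3 cross_components algebra_simps)

lemma eq_if_inner_eq_basis:
  fixes a b c x y :: "real^3"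
  assumes "a \<bullet> (b \<times> c) \<noteq> 0" "a \<bullet> x = a \<bullet> y" "b \<bullet> x = b \<bullet> y" "c \<bullet> x = c \<bullet> y"
  shows "x = y"
proof -
  have "a \<bullet> (x - y) = 0" "b \<bullet> (x - y) = 0" "c \<bullet> (x - y) = 0"
    using assms(2-4) by (simp_all add: inner_diff_right)
  then have "(a \<bullet> (b \<times> c)) *\<^sub>R (x - y) = 0"
    using scaleR_triple_eq_sum_cross[of a b c "x - y"] by (simp add: inner_commute[of "x - y"])
  then show ?thesis
    using assms(1) by simp
qed

lemma exists_inner_eq_3:
  fixes a b c :: "real^3"
  assumes "a \<bullet> (b \<times> c) \<noteq> 0"
  obtains V where "a \<bullet> V = \<alpha>" "b \<bullet> V = \<beta>" "c \<bullet> V = \<gamma>"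
proof
  let ?V = "(1 / (a \<bullet> (b \<times> c))) *\<^sub>R (\<alpha> *\<^sub>R (b \<times> c) + \<beta> *\<^sub>R (c \<times> a) + \<gamma> *\<^sub>R (a \<times> b))"
  show "a \<bullet> ?V = \<alpha>" "b \<bullet> ?V = \<beta>" "c \<bullet> ?V = \<gamma>"
    using assms by (simp_all add: inner_add_right dot_cross_self inner_cross_cyclic)
qed

lemma orthogonal_imp_parallel_cross:
  fixes w x y :: "real^3"
  assumes "w \<bullet> x = 0" "w \<bullet> y = 0"
  shows "((x \<times> y) \<bullet> (x \<times> y)) *\<^sub>R w = (w \<bullet> (x \<times> y)) *\<^sub>R (x \<times> y)"
proof -
  have "w \<times> (x \<times> y) = 0" using assms by (simp add: Lagrange)
  moreover have "(x \<times> y) \<times> (w \<times> (x \<times> y)) =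
      ((x \<times> y) \<bullet> (x \<times> y)) *\<^sub>R w - ((x \<times> y) \<bullet> w) *\<^sub>R (x \<times> y)"
    by (rule Lagrange)
  ultimately show ?thesis by (simp add: inner_commute)
qed

lemma cross_eq_scaleR_if_orthogonal:
  fixes h x y E :: "real^3"
  assumes nE: "(x \<times> y) \<bullet> E \<noteq> 0" and h: "h \<bullet> x = 0" "h \<bullet> y = 0" "h \<bullet> E = -1"
  shows "x \<times> y = (- ((x \<times> y) \<bullet> E)) *\<^sub>R h"
proof -
  let ?n = "x \<times> y"
  have nn: "?n \<bullet> ?n \<noteq> 0"
    using nE by auto
  have parallel: "(?n \<bullet> ?n) *\<^sub>R h = (h \<bullet> ?n) *\<^sub>R ?n"
    using h(1,2) by (rule orthogonal_imp_parallel_cross)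
  then have "(?n \<bullet> ?n) * (h \<bullet> E) = (h \<bullet> ?n) * (?n \<bullet> E)"
    by (metis inner_scaleR_left)
  then have "h \<bullet> ?n = - (?n \<bullet> ?n) / (?n \<bullet> E)"
    using h(3) nE by (simp add: field_simps)
  then have "(?n \<bullet> ?n) *\<^sub>R h = (?n \<bullet> ?n) *\<^sub>R ((- 1 / (?n \<bullet> E)) *\<^sub>R ?n)"
    using parallel by simp
  then have "h = (- 1 / (?n \<bullet> E)) *\<^sub>R ?n"
    using nn scaleR_cancel_left by blast
  then show ?thesis
    using nE by simp
qed

lemma cross_diff_inner_eq_triple:
  fixes V Q1 Q2 Q3 :: "real^3"
  shows "((Q2 - Q1) \<times> (Q3 - Q1)) \<bullet> (Q1 - V) = (Q1 - V) \<bullet> ((Q2 - V) \<times> (Q3 - V))"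
  by (simp add: inner_vec_def sum_3 cross_components algebra_simps)

lemma cross_consecutive_triple:
  fixes e1 e2 e3 e4 :: "real^3"
  shows "(e1 \<times> e2) \<bullet> ((e2 \<times> e3) \<times> (e3 \<times> e4)) = (e1 \<bullet> (e2 \<times> e3)) * (e2 \<bullet> (e3 \<times> e4))"
  by (simp add: inner_vec_def sum_3 cross_components algebra_simps)

lemma cross_consecutive_relation:
  fixes e1 e2 e3 e4 :: "real^3"
  assumes "e4 = p *\<^sub>R e1 + u *\<^sub>R e2 + v *\<^sub>R e3"
  shows "p *\<^sub>R (e4 \<times> e1) = v *\<^sub>R (e3 \<times> e4) + (u * v) *\<^sub>R (e2 \<times> e3) - (p * u) *\<^sub>R (e1 \<times> e2)"
  using assms by (simp add: vec_eq_iff forall_3 inner_vec_def sum_3 cross_components algebra_simps)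

lemma cross_consecutive_inner:
  fixes e1 e2 e3 e4 :: "real^3"
  assumes "e4 = p *\<^sub>R e1 + u *\<^sub>R e2 + v *\<^sub>R e3" and "M = e1 \<bullet> (e2 \<times> e3)"
  shows "(e1 \<times> e2) \<bullet> e3 = M" "(e1 \<times> e2) \<bullet> e4 = v * M"
    "(e2 \<times> e3) \<bullet> e1 = M" "(e2 \<times> e3) \<bullet> e4 = p * M"
    "(e3 \<times> e4) \<bullet> e1 = - u * M" "(e3 \<times> e4) \<bullet> e2 = p * M"
    "(e4 \<times> e1) \<bullet> e2 = v * M" "(e4 \<times> e1) \<bullet> e3 = - u * M"
  using assms(1) unfolding assms(2) by (simp_all add: inner_vec_def sum_3 cross_components algebra_simps)

lemma affine_combination_if_alternating_relation:
  fixes a b c d E :: "'a::real_inner"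
  assumes relation: "c4 *\<^sub>R d = c1 *\<^sub>R a + c2 *\<^sub>R b + c3 *\<^sub>R c"
    and signs: "0 < c1" "c2 < 0" "0 < c3" "0 < c4"
    and level: "a \<bullet> E = k" "b \<bullet> E = k" "c \<bullet> E = k" "d \<bullet> E = k" "k \<noteq> 0"
  shows "\<exists>q r. d = (1 - q - r) *\<^sub>R a + q *\<^sub>R b + r *\<^sub>R c \<and> q < 0 \<and> 0 < r \<and> q + r < 1"
proof -
  have d: "d = (c1 / c4) *\<^sub>R a + (c2 / c4) *\<^sub>R b + (c3 / c4) *\<^sub>R c"
    using arg_cong[OF relation, of "scaleR (1 / c4)"] signs(4) by (simp add: scaleR_add_right)
  then have "k = (c1 / c4 + c2 / c4 + c3 / c4) * k"
    using level by (simp add: inner_add_left algebra_simps)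
  then have "c1 / c4 = 1 - c2 / c4 - c3 / c4"
    using level(5) by simp
  moreover have "0 < c1 / c4" "c2 / c4 < 0" "0 < c3 / c4"
    using signs by (simp_all add: divide_neg_pos)
  ultimately show ?thesis
    using d by (intro exI[of _ "c2 / c4"] exI[of _ "c3 / c4"]) simp
qed

section \<open>Planes and convex quadrilaterals\<close>

lemma affine_hull_3_eq_plane:
  fixes A B C :: "real^3"
  assumes n: "(B - A) \<times> (C - A) \<noteq> 0"
  shows "affine hull {A, B, C} = {x. ((B - A) \<times> (C - A)) \<bullet> x = ((B - A) \<times> (C - A)) \<bullet> A}"
proof (rule affine_dim_equal)
  let ?n = "(B - A) \<times> (C - A)"
  have noncol: "\<not> collinear {A, B, C}"
    using n by (simp add: cross_diff_eq_0_iff_collinear)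
  then have "A \<noteq> B" "A \<noteq> C" "B \<noteq> C"
    by (auto simp: collinear_3_eq_affine_dependent)
  then have "aff_dim {A, B, C} = 2"
    using noncol aff_dim_affine_independent[of "{A, B, C}"]
    by (simp add: collinear_3_eq_affine_dependent)
  then show "aff_dim (affine hull {A, B, C}) = aff_dim {x. ?n \<bullet> x = ?n \<bullet> A}"
    using n by simp
  have "?n \<bullet> (B - A) = 0" "?n \<bullet> (C - A) = 0"
    by (simp_all add: dot_cross_self)
  then have "?n \<bullet> B = ?n \<bullet> A" "?n \<bullet> C = ?n \<bullet> A"
    by (simp_all add: inner_diff_right)
  then show "affine hull {A, B, C} \<subseteq> {x. ?n \<bullet> x = ?n \<bullet> A}"
    by (intro hull_minimal) (auto simp: affine_hyperplane)
qed (auto simp: affine_hyperplane)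

lemma affine_hull_4_eq_plane:
  fixes A B C D :: "real^3"
  assumes n: "(B - A) \<times> (C - A) \<noteq> 0" and D: "D = A + u *\<^sub>R (B - A) + v *\<^sub>R (C - A)"
  shows "affine hull {A, B, C, D} = {x. ((B - A) \<times> (C - A)) \<bullet> x = ((B - A) \<times> (C - A)) \<bullet> A}"
proof -
  have "D \<in> affine hull {A, B, C}"
    using D by (simp add: affine_hull_3_eq_plane[OF n] inner_add_right dot_cross_self)
  then have "affine hull {D, A, B, C} = affine hull {A, B, C}"
    by (rule hull_redundant)
  then show ?thesis
    by (simp add: affine_hull_3_eq_plane[OF n] insert_commute)
qed

lemma plane_coordinate_functionals:
  fixes x y :: "real^3"
  assumes "x \<times> y \<noteq> 0"
  obtains w1 w2 where "w1 \<bullet> x = 1" "w1 \<bullet> y = 0" "w2 \<bullet> x = 0" "w2 \<bullet> y = 1"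
proof
  let ?n = "x \<times> y"
  have nn: "?n \<bullet> ?n \<noteq> 0" using assms by simp
  have "(y \<times> ?n) \<bullet> x = ?n \<bullet> ?n" "(?n \<times> x) \<bullet> y = ?n \<bullet> ?n"
    by (simp_all add: inner_vec_def sum_3 cross_components algebra_simps)
  then show "((1 / (?n \<bullet> ?n)) *\<^sub>R (y \<times> ?n)) \<bullet> x = 1" "((1 / (?n \<bullet> ?n)) *\<^sub>R (?n \<times> x)) \<bullet> y = 1"
    using nn by simp_all
  show "((1 / (?n \<bullet> ?n)) *\<^sub>R (y \<times> ?n)) \<bullet> y = 0" "((1 / (?n \<bullet> ?n)) *\<^sub>R (?n \<times> x)) \<bullet> x = 0"
    by (simp_all add: dot_cross_self)
qed

lemma segment_face_of_convex_hull:
  fixes P Q :: "'a::euclidean_space"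
  assumes "finite S" "P \<in> S" "Q \<in> S" "w \<bullet> P = t" "w \<bullet> Q = t" "\<forall>x\<in>S - {P, Q}. t < w \<bullet> x"
  shows "closed_segment P Q face_of convex hull S"
proof -
  have "affine hull {P, Q} \<subseteq> {x. w \<bullet> x = t}"
    by (rule hull_minimal) (use assms affine_hyperplane in auto)
  moreover have "convex hull (S - {P, Q}) \<subseteq> {x. t < w \<bullet> x}"
    by (rule hull_minimal) (use assms convex_halfspace_gt in auto)
  ultimately have "affine hull {P, Q} \<inter> convex hull (S - {P, Q}) = {}"
    by blast
  then show ?thesis
    using face_of_convex_hulls[of S "{P, Q}"] assms by (simp add: segment_convex_hull)
qed

lemma edge_supporting_functional:
  fixes P Q :: "'a::euclidean_space"
  assumes "closed_segment P Q face_of convex hull S" "finite S"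
  obtains w t where "w \<bullet> P = t" "w \<bullet> Q = t" "\<forall>x\<in>convex hull S - closed_segment P Q. w \<bullet> x < t"
proof -
  have "closed_segment P Q exposed_face_of convex hull S"
    using assms exposed_face_of_polyhedron polyhedron_convex_hull by blast
  then obtain w t where "convex hull S \<subseteq> {x. w \<bullet> x \<le> t}"
    and "closed_segment P Q = convex hull S \<inter> {x. w \<bullet> x = t}"
    unfolding exposed_face_of_def by blast
  moreover have "P \<in> closed_segment P Q" "Q \<in> closed_segment P Q" by auto
  ultimately show ?thesis
    using that[of w t] by fastforce
qed

lemma convex_quadrilateral_if_coordinates:
  fixes A B C D :: "real^3"
  assumes n: "(B - A) \<times> (C - A) \<noteq> 0"
    and D: "D = A + u *\<^sub>R (B - A) + v *\<^sub>R (C - A)"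
    and u: "u < 0" and v: "0 < v" and uv: "u + v < 1"
  shows "convex_quadrilateral A B C D"
proof -
  obtain w1 w2 where w: "w1 \<bullet> (B - A) = 1" "w1 \<bullet> (C - A) = 0" "w2 \<bullet> (B - A) = 0" "w2 \<bullet> (C - A) = 1"
    using plane_coordinate_functionals[OF n] by blast
  have val: "\<And>w. w \<bullet> B = w \<bullet> A + w \<bullet> (B - A)" "\<And>w. w \<bullet> C = w \<bullet> A + w \<bullet> (C - A)"
    "\<And>w. w \<bullet> D = w \<bullet> A + u * (w \<bullet> (B - A)) + v * (w \<bullet> (C - A))"
    by (simp_all add: D inner_diff_right inner_add_right)
  have w1: "w1 \<bullet> B = w1 \<bullet> A + 1" "w1 \<bullet> C = w1 \<bullet> A" "w1 \<bullet> D = w1 \<bullet> A + u"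
    and w2: "w2 \<bullet> B = w2 \<bullet> A" "w2 \<bullet> C = w2 \<bullet> A + 1" "w2 \<bullet> D = w2 \<bullet> A + v"
    using val w by auto
  have "A \<noteq> B" "A \<noteq> C" "B \<noteq> C" "D \<noteq> A" "D \<noteq> B" "D \<noteq> C"
    using w1 w2 u v by auto
  then have dist: "distinct [A, B, C, D]" by auto
  let ?S = "{A, B, C, D}"
  have "aff_dim ?S = aff_dim (affine hull ?S)"
    by simp
  also have "\<dots> = 2"
    using n by (simp add: affine_hull_4_eq_plane[OF n D])
  finally have "aff_dim ?S = 2" .
  have AB: "closed_segment A B face_of convex hull ?S"
    by (rule segment_face_of_convex_hull[of _ _ _ w2 "w2 \<bullet> A"]) (use w2 v dist in auto)
  have BC: "closed_segment B C face_of convex hull ?S"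
    by (rule segment_face_of_convex_hull[of _ _ _ "- (w1 + w2)" "- ((w1 + w2) \<bullet> A) - 1"])
       (use w1 w2 uv dist in \<open>auto simp: algebra_simps\<close>)
  have CD: "closed_segment C D face_of convex hull ?S"
    by (rule segment_face_of_convex_hull[of _ _ _ "(1 - v) *\<^sub>R w1 + u *\<^sub>R w2"
          "((1 - v) *\<^sub>R w1 + u *\<^sub>R w2) \<bullet> A + u"])
       (use w1 w2 u uv dist in \<open>auto simp: algebra_simps\<close>)
  have DA: "closed_segment D A face_of convex hull ?S"
    by (rule segment_face_of_convex_hull[of _ _ _ "v *\<^sub>R w1 - u *\<^sub>R w2" "(v *\<^sub>R w1 - u *\<^sub>R w2) \<bullet> A"])
       (use w1 w2 u v dist in \<open>auto simp: algebra_simps\<close>)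
  have "\<forall>P\<in>?S. P extreme_point_of convex hull ?S"
    using extreme_point_of_face[OF AB] extreme_point_of_face[OF CD] extreme_point_of_segment
    by blast
  then show ?thesis
    unfolding convex_quadrilateral_def using dist \<open>aff_dim ?S = 2\<close> AB BC CD DA by blast
qed

lemma convex_quadrilateral_vertex_not_in_edge:
  fixes A B C D :: "real^3"
  assumes "convex_quadrilateral A B C D"
    and "X \<in> {A, B, C, D}" "Y \<in> {A, B, C, D}" "Z \<in> {A, B, C, D}" "X \<noteq> Y" "X \<noteq> Z"
  shows "X \<in> convex hull {A, B, C, D} - closed_segment Y Z"
proof -
  have "X extreme_point_of convex hull {A, B, C, D}"
    using assms(1,2) unfolding convex_quadrilateral_def by blast
  then show ?thesis
    using assms(3-6) by (auto simp: extreme_point_of_def open_segment_def intro: hull_inc)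
qed

lemma convex_quadrilateral_edge_functional:
  fixes A B C D :: "real^3"
  assumes quad: "convex_quadrilateral A B C D"
    and edge: "closed_segment P Q face_of convex hull {A, B, C, D}"
    and "P \<in> {A, B, C, D}" "Q \<in> {A, B, C, D}"
  obtains w t where "w \<bullet> P = t" "w \<bullet> Q = t" "\<forall>X\<in>{A, B, C, D} - {P, Q}. w \<bullet> X < t"
proof -
  obtain w t where "w \<bullet> P = t" "w \<bullet> Q = t"
    and below: "\<forall>x\<in>convex hull {A, B, C, D} - closed_segment P Q. w \<bullet> x < t"
    using edge_supporting_functional[OF edge] by blast
  moreover have "\<forall>X\<in>{A, B, C, D} - {P, Q}. w \<bullet> X < t"
    using below convex_quadrilateral_vertex_not_in_edge[OF quad] assms(3,4) by blast
  ultimately show ?thesis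
    using that by blast
qed

lemma convex_quadrilateral_affine_coordinates:
  fixes A B C D :: "real^3"
  assumes quad: "convex_quadrilateral A B C D"
  shows "(B - A) \<times> (C - A) \<noteq> 0"
    and "\<exists>u v. D = A + u *\<^sub>R (B - A) + v *\<^sub>R (C - A)"
proof -
  let ?S = "{A, B, C, D}"
  have "distinct [A, B, C, D]" "aff_dim ?S = 2"
    using quad unfolding convex_quadrilateral_def by blast+
  then have "\<not> collinear {A, B, C}"
    using convex_quadrilateral_vertex_not_in_edge[OF quad, of A B C]
      convex_quadrilateral_vertex_not_in_edge[OF quad, of B C A]
      convex_quadrilateral_vertex_not_in_edge[OF quad, of C A B]
    by (auto simp: collinear_between_cases between_mem_segment)
  then show n: "(B - A) \<times> (C - A) \<noteq> 0"
    by (simp add: cross_diff_eq_0_iff_collinear)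
  have "affine hull {A, B, C} = affine hull ?S"
  proof (rule affine_dim_equal)
    show "aff_dim (affine hull {A, B, C}) = aff_dim (affine hull ?S)"
      using \<open>aff_dim ?S = 2\<close> n by (simp add: affine_hull_3_eq_plane)
    show "affine hull {A, B, C} \<subseteq> affine hull ?S"
      by (rule hull_mono) auto
  qed auto
  then have "D \<in> affine hull {A, B, C}"
    by (auto intro: hull_inc)
  then obtain a u v where "D = a *\<^sub>R A + u *\<^sub>R B + v *\<^sub>R C" "a + u + v = 1"
    unfolding affine_hull_3 by blast
  then have "D = A + u *\<^sub>R (B - A) + v *\<^sub>R (C - A)"
    by (simp add: algebra_simps flip: scaleR_add_left)
  then show "\<exists>u v. D = A + u *\<^sub>R (B - A) + v *\<^sub>R (C - A)"
    by blast
qed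

lemma convex_quadrilateral_coordinates:
  fixes A B C D :: "real^3"
  assumes quad: "convex_quadrilateral A B C D"
  shows "(B - A) \<times> (C - A) \<noteq> 0"
    and "\<exists>u v. D = A + u *\<^sub>R (B - A) + v *\<^sub>R (C - A) \<and> u < 0 \<and> 0 < v \<and> u + v < 1"
proof -
  show "(B - A) \<times> (C - A) \<noteq> 0"
    using convex_quadrilateral_affine_coordinates(1)[OF quad] .
  obtain u v where D: "D = A + u *\<^sub>R (B - A) + v *\<^sub>R (C - A)"
    using convex_quadrilateral_affine_coordinates(2)[OF quad] by blast
  have dist: "distinct [A, B, C, D]"
    and AB: "closed_segment A B face_of convex hull {A, B, C, D}"
    and BC: "closed_segment B C face_of convex hull {A, B, C, D}"
    and DA: "closed_segment D A face_of convex hull {A, B, C, D}"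
    using quad unfolding convex_quadrilateral_def by blast+
  have val: "w \<bullet> D - t = (w \<bullet> A - t) + u * (w \<bullet> B - w \<bullet> A) + v * (w \<bullet> C - w \<bullet> A)" for w t
    by (simp add: D inner_add_right inner_diff_right)
  obtain w t where "w \<bullet> A = t" "w \<bullet> B = t" and "\<forall>X\<in>{A, B, C, D} - {A, B}. w \<bullet> X < t"
    using convex_quadrilateral_edge_functional[OF quad AB] by auto
  moreover from this(3) have "w \<bullet> C < t" "w \<bullet> D < t"
    using dist by auto
  ultimately have "v * (w \<bullet> C - t) < 0" "w \<bullet> C - t < 0"
    using val[of w t] by simp_all
  then have v: "0 < v"
    by (simp add: mult_less_0_iff)
  obtain w t where "w \<bullet> B = t" "w \<bullet> C = t" and "\<forall>X\<in>{A, B, C, D} - {B, C}. w \<bullet> X < t"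
    using convex_quadrilateral_edge_functional[OF quad BC] by auto
  moreover from this(3) have "w \<bullet> A < t" "w \<bullet> D < t"
    using dist by auto
  ultimately have "(1 - u - v) * (w \<bullet> A - t) < 0" "w \<bullet> A - t < 0"
    using val[of w t] by (simp_all add: algebra_simps)
  then have uv: "u + v < 1"
    by (simp add: mult_less_0_iff)
  obtain w t where "w \<bullet> D = t" "w \<bullet> A = t" and "\<forall>X\<in>{A, B, C, D} - {D, A}. w \<bullet> X < t"
    using convex_quadrilateral_edge_functional[OF quad DA] by auto
  moreover from this(3) have "w \<bullet> B < t" "w \<bullet> C < t"
    using dist by auto
  ultimately have "u * (w \<bullet> B - t) = - (v * (w \<bullet> C - t))" "0 < - (v * (w \<bullet> C - t))" "w \<bullet> B - t < 0"
    using val[of w t] v by (simp_all add: algebra_simps mult_pos_neg)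
  then have "0 < u * (w \<bullet> B - t)" "w \<bullet> B - t < 0"
    by simp_all
  then have u: "u < 0"
    by (simp add: zero_less_mult_iff)
  show "\<exists>u v. D = A + u *\<^sub>R (B - A) + v *\<^sub>R (C - A) \<and> u < 0 \<and> 0 < v \<and> u + v < 1"
    using D u v uv by blast
qed

section \<open>Isotropic planes and metric duality\<close>

lemma isotropic_plane_hyperplane_iff:
  fixes n :: "real^3"
  assumes "n \<noteq> 0"
  shows "isotropic_plane {x. n \<bullet> x = b} \<longleftrightarrow> n $ 3 = 0"
proof -
  have shift: "n \<bullet> (x + t *\<^sub>R isotropic_dir) = n \<bullet> x + t * n $ 3" for x t
    by (simp add: isotropic_dir_def inner_add_right inner_axis)
  have "n \<bullet> ((b / (n \<bullet> n)) *\<^sub>R n) = b"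
    using assms by simp
  then have "\<exists>x. n \<bullet> x = b" ..
  then show ?thesis
    using assms by (auto simp: isotropic_plane_def affine_hyperplane shift)
qed

lemma ex_isotropic_plane_superset_iff:
  fixes A B C D :: "real^3"
  assumes n: "(B - A) \<times> (C - A) \<noteq> 0" and D: "D = A + u *\<^sub>R (B - A) + v *\<^sub>R (C - A)"
  shows "(\<exists>P. isotropic_plane P \<and> {A, B, C, D} \<subseteq> P) \<longleftrightarrow> ((B - A) \<times> (C - A)) $ 3 = 0"
proof -
  let ?n = "(B - A) \<times> (C - A)"
  let ?H = "{x. ?n \<bullet> x = ?n \<bullet> A}"
  have H: "affine hull {A, B, C, D} = ?H"
    by (rule affine_hull_4_eq_plane[OF n D])
  have "P = ?H" if "isotropic_plane P" "{A, B, C, D} \<subseteq> P" for P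
  proof (rule affine_dim_equal[symmetric])
    show "?H \<subseteq> P"
      using that H hull_minimal[of "{A, B, C, D}" P affine] by (auto simp: isotropic_plane_def)
    show "aff_dim ?H = aff_dim P"
      using that n by (simp add: isotropic_plane_def)
  qed (use that in \<open>auto simp: affine_hyperplane isotropic_plane_def\<close>)
  moreover have "{A, B, C, D} \<subseteq> ?H"
    using H hull_subset[of "{A, B, C, D}" affine] by blast
  ultimately have "(\<exists>P. isotropic_plane P \<and> {A, B, C, D} \<subseteq> P) \<longleftrightarrow> isotropic_plane ?H"
    by blast
  then show ?thesis
    using n by (simp add: isotropic_plane_hyperplane_iff)
qed

definition dual_normal :: "real^3 \<Rightarrow> real^3" where
  "dual_normal P = vector [P $ 1, P $ 2, -1]"

lemma dual_plane_eq: "dual_plane P = {X. dual_normal P \<bullet> X = P $ 3}"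
  by (auto simp: dual_plane_def dual_normal_def inner_vec_def sum_3)

lemma inner_dual_normal_isotropic_dir: "dual_normal P \<bullet> isotropic_dir = -1"
  by (simp add: dual_normal_def isotropic_dir_def inner_axis)

lemma cross_diff_nth_3_eq_dual_normal_triple:
  fixes A B C :: "real^3"
  shows "((B - A) \<times> (C - A)) $ 3 = - (dual_normal A \<bullet> (dual_normal B \<times> dual_normal C))"
  by (simp add: dual_normal_def inner_vec_def sum_3 cross_components algebra_simps)

lemma affine_combination_iff_dual_normal:
  fixes A B C D V :: "real^3"
  assumes "V \<in> dual_plane A" "V \<in> dual_plane B" "V \<in> dual_plane C"
  shows "D = A + q *\<^sub>R (B - A) + r *\<^sub>R (C - A) \<longleftrightarrow>
    dual_normal D = (1 - q - r) *\<^sub>R dual_normal A + q *\<^sub>R dual_normal B + r *\<^sub>R dual_normal C \<and>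
    V \<in> dual_plane D"
proof -
  let ?comb = "\<lambda>i. (1 - q - r) * A $ i + q * B $ i + r * C $ i"
  have V: "A $ 3 = A $ 1 * V $ 1 + A $ 2 * V $ 2 - V $ 3" "B $ 3 = B $ 1 * V $ 1 + B $ 2 * V $ 2 - V $ 3"
    "C $ 3 = C $ 1 * V $ 1 + C $ 2 * V $ 2 - V $ 3"
    using assms by (simp_all add: dual_plane_def)
  have "?comb 3 = ?comb 1 * V $ 1 + ?comb 2 * V $ 2 - V $ 3"
    unfolding V by (simp add: algebra_simps)
  moreover have "D = A + q *\<^sub>R (B - A) + r *\<^sub>R (C - A) \<longleftrightarrow> D $ 1 = ?comb 1 \<and> D $ 2 = ?comb 2 \<and> D $ 3 = ?comb 3"
    by (auto simp: vec_eq_iff forall_3 algebra_simps)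
  moreover have "dual_normal D = (1 - q - r) *\<^sub>R dual_normal A + q *\<^sub>R dual_normal B + r *\<^sub>R dual_normal C
      \<longleftrightarrow> D $ 1 = ?comb 1 \<and> D $ 2 = ?comb 2"
    by (auto simp: dual_normal_def vec_eq_iff forall_3 algebra_simps)
  ultimately show ?thesis
    by (auto simp: dual_plane_def)
qed

lemma ray_mem_flat_angle:
  fixes V P Q x :: "real^3"
  assumes "0 \<le> t" "x \<in> closed_segment P Q"
  shows "V + t *\<^sub>R (x - V) \<in> flat_angle V P Q"
  using assms unfolding flat_angle_def ray_cone_def by blast

lemma vertices_mem_flat_angle:
  fixes V P Q :: "real^3"
  shows "V \<in> flat_angle V P Q" "P \<in> flat_angle V P Q" "Q \<in> flat_angle V P Q"
  using ray_mem_flat_angle[of 0 P P Q V] ray_mem_flat_angle[of 1 P P Q V] ray_mem_flat_angle[of 1 Q P Q V]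
  by simp_all

lemma flat_angle_subset_affine_iff:
  fixes V P Q :: "real^3"
  assumes "affine H"
  shows "flat_angle V P Q \<subseteq> H \<longleftrightarrow> V \<in> H \<and> P \<in> H \<and> Q \<in> H"
proof
  show "flat_angle V P Q \<subseteq> H \<Longrightarrow> V \<in> H \<and> P \<in> H \<and> Q \<in> H"
    using vertices_mem_flat_angle by blast
next
  assume VPQ: "V \<in> H \<and> P \<in> H \<and> Q \<in> H"
  then have segment: "closed_segment P Q \<subseteq> H"
    using assms by (simp add: closed_segment_subset affine_imp_convex)
  show "flat_angle V P Q \<subseteq> H"
  proof
    fix x assume "x \<in> flat_angle V P Q"
    then obtain t y where "x = V + t *\<^sub>R (y - V)" and y: "y \<in> closed_segment P Q"
      unfolding flat_angle_def ray_cone_def by blast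
    then have "x = (1 - t) *\<^sub>R V + t *\<^sub>R y"
      by (simp add: algebra_simps)
    then show "x \<in> H"
      using mem_affine[OF assms, of V y "1 - t" t] VPQ segment y by auto
  qed
qed

lemma flat_angle_subset_dual_plane_iff:
  "flat_angle V P Q \<subseteq> dual_plane A \<longleftrightarrow>
    V \<in> dual_plane A \<and> dual_normal A \<bullet> (P - V) = 0 \<and> dual_normal A \<bullet> (Q - V) = 0"
proof -
  have "affine (dual_plane A)"
    by (simp add: dual_plane_eq affine_hyperplane)
  then show ?thesis
    by (auto simp: flat_angle_subset_affine_iff dual_plane_eq inner_diff_right)
qed

section \<open>Four-hedral angles\<close>

lemma inner_pos_interior_ray_cone:
  fixes V x \<psi> :: "real^3"
  assumes "\<psi> \<noteq> 0" and S: "\<forall>q\<in>S. 0 \<le> \<psi> \<bullet> (q - V)"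
    and x: "x \<in> interior (ray_cone V (convex hull S))"
  shows "0 < \<psi> \<bullet> (x - V)"
proof -
  have hull: "convex hull S \<subseteq> {y. \<psi> \<bullet> y \<ge> \<psi> \<bullet> V}"
    by (rule hull_minimal) (use S convex_halfspace_ge in \<open>auto simp: inner_diff_right\<close>)
  have "ray_cone V (convex hull S) \<subseteq> {y. \<psi> \<bullet> y \<ge> \<psi> \<bullet> V}"
  proof
    fix y assume "y \<in> ray_cone V (convex hull S)"
    then obtain t q where "y = V + t *\<^sub>R (q - V)" "0 \<le> t" "q \<in> convex hull S"
      unfolding ray_cone_def by blast
    moreover from hull \<open>q \<in> convex hull S\<close> have "0 \<le> \<psi> \<bullet> (q - V)"
      by (auto simp: inner_diff_right)
    ultimately show "y \<in> {y. \<psi> \<bullet> y \<ge> \<psi> \<bullet> V}"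
      by (simp add: inner_add_right)
  qed
  then have "x \<in> interior {y. \<psi> \<bullet> y \<ge> \<psi> \<bullet> V}"
    using x interior_mono by blast
  then show ?thesis
    using assms(1) by (simp add: inner_diff_right)
qed

lemma convex_combination_mem_convex_hull_4:
  fixes Q1 Q2 Q3 Q4 :: "'a::real_vector"
  assumes "0 \<le> a1" "0 \<le> a2" "0 \<le> a3" "0 \<le> a4" "a1 + a2 + a3 + a4 = 1"
  shows "a1 *\<^sub>R Q1 + a2 *\<^sub>R Q2 + a3 *\<^sub>R Q3 + a4 *\<^sub>R Q4 \<in> convex hull {Q1, Q2, Q3, Q4}"
proof -
  define Q :: "nat \<Rightarrow> 'a" where "Q i = (if i = 1 then Q1 else if i = 2 then Q2 else if i = 3 then Q3 else Q4)" for i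
  define a :: "nat \<Rightarrow> real" where "a i = (if i = 1 then a1 else if i = 2 then a2 else if i = 3 then a3 else a4)" for i
  have "(\<Sum>i\<in>{1, 2, 3, 4}. a i *\<^sub>R Q i) \<in> convex hull {Q1, Q2, Q3, Q4}"
    by (rule convex_sum) (use assms in \<open>auto simp: a_def Q_def intro: hull_inc\<close>)
  then show ?thesis
    by (simp add: a_def Q_def add.assoc)
qed

lemma combination_mem_hedral_angle4:
  fixes V e1 e2 e3 e4 :: "real^3"
  assumes "0 \<le> c1" "0 \<le> c2" "0 \<le> c3" "0 \<le> c4"
  shows "V + c1 *\<^sub>R e1 + c2 *\<^sub>R e2 + c3 *\<^sub>R e3 + c4 *\<^sub>R e4 \<in>
    hedral_angle4 V (V + e1) (V + e2) (V + e3) (V + e4)"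
proof (cases "c1 + c2 + c3 + c4 = 0")
  case True
  then have "c1 = 0" "c2 = 0" "c3 = 0" "c4 = 0"
    using assms by linarith+
  then have "V + c1 *\<^sub>R e1 + c2 *\<^sub>R e2 + c3 *\<^sub>R e3 + c4 *\<^sub>R e4 = V + 0 *\<^sub>R ((V + e1) - V)"
    by simp
  then show ?thesis
    unfolding hedral_angle4_def ray_cone_def by (blast intro: hull_inc)
next
  case False
  define t where "t = c1 + c2 + c3 + c4"
  have t: "0 < t"
    using False assms by (simp add: t_def)
  define q where "q = (c1 / t) *\<^sub>R (V + e1) + (c2 / t) *\<^sub>R (V + e2) + (c3 / t) *\<^sub>R (V + e3) + (c4 / t) *\<^sub>R (V + e4)"
  have sum: "c1 / t + c2 / t + c3 / t + c4 / t = 1"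
    using t by (simp add: t_def add_divide_distrib[symmetric])
  have "q \<in> convex hull {V + e1, V + e2, V + e3, V + e4}"
    unfolding q_def by (rule convex_combination_mem_convex_hull_4) (use assms t sum in auto)
  moreover have "q = V + (c1 / t) *\<^sub>R e1 + (c2 / t) *\<^sub>R e2 + (c3 / t) *\<^sub>R e3 + (c4 / t) *\<^sub>R e4"
    using sum unfolding q_def by (simp add: algebra_simps flip: scaleR_add_left)
  then have "V + c1 *\<^sub>R e1 + c2 *\<^sub>R e2 + c3 *\<^sub>R e3 + c4 *\<^sub>R e4 = V + t *\<^sub>R (q - V)"
    using t by (simp add: algebra_simps)
  ultimately show ?thesis
    unfolding hedral_angle4_def ray_cone_def using t by force
qed

lemma combination_mem_interior_hedral_angle4:
  fixes V e1 e2 e3 e4 :: "real^3"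
  assumes M: "e1 \<bullet> (e2 \<times> e3) \<noteq> 0" and c: "0 < c1" "0 < c2" "0 < c3" "0 \<le> c4"
  shows "V + c1 *\<^sub>R e1 + c2 *\<^sub>R e2 + c3 *\<^sub>R e3 + c4 *\<^sub>R e4 \<in>
    interior (hedral_angle4 V (V + e1) (V + e2) (V + e3) (V + e4))"
proof -
  let ?M = "e1 \<bullet> (e2 \<times> e3)"
  let ?W = "V + c4 *\<^sub>R e4"
  \<comment> \<open>the open simplicial cone with apex \<open>?W\<close> spanned by \<open>e1, e2, e3\<close>\<close>
  define U where "U = {x. 0 < ?M * ((x - ?W) \<bullet> (e2 \<times> e3))} \<inter>
    {x. 0 < ?M * ((x - ?W) \<bullet> (e3 \<times> e1))} \<inter> {x. 0 < ?M * ((x - ?W) \<bullet> (e1 \<times> e2))}"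
  have "open U"
    unfolding U_def by (intro open_Int open_Collect_less continuous_intros)
  moreover have "U \<subseteq> hedral_angle4 V (V + e1) (V + e2) (V + e3) (V + e4)"
  proof
    fix x assume "x \<in> U"
    define s1 s2 s3 where "s1 = ((x - ?W) \<bullet> (e2 \<times> e3)) / ?M"
      and "s2 = ((x - ?W) \<bullet> (e3 \<times> e1)) / ?M" and "s3 = ((x - ?W) \<bullet> (e1 \<times> e2)) / ?M"
    have "0 < s1" "0 < s2" "0 < s3"
      using \<open>x \<in> U\<close> by (auto simp: U_def s1_def s2_def s3_def zero_less_mult_iff zero_less_divide_iff)
    moreover have "?M *\<^sub>R (x - ?W) = ?M *\<^sub>R (s1 *\<^sub>R e1 + s2 *\<^sub>R e2 + s3 *\<^sub>R e3)"
      using scaleR_triple_eq_sum[of e1 e2 e3 "x - ?W"] M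
      by (simp add: s1_def s2_def s3_def scaleR_add_right)
    then have "x - ?W = s1 *\<^sub>R e1 + s2 *\<^sub>R e2 + s3 *\<^sub>R e3"
      using M by simp
    then have "x = V + s1 *\<^sub>R e1 + s2 *\<^sub>R e2 + s3 *\<^sub>R e3 + c4 *\<^sub>R e4"
      by (simp add: algebra_simps)
    ultimately show "x \<in> hedral_angle4 V (V + e1) (V + e2) (V + e3) (V + e4)"
      using combination_mem_hedral_angle4 c(4) by simp
  qed
  moreover have "V + c1 *\<^sub>R e1 + c2 *\<^sub>R e2 + c3 *\<^sub>R e3 + c4 *\<^sub>R e4 \<in> U"
  proof -
    let ?y = "c1 *\<^sub>R e1 + (c2 *\<^sub>R e2 + c3 *\<^sub>R e3)"
    have "0 < ?M * ?M"
      using M not_real_square_gt_zero by blast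
    then have "0 < ?M * (c * ?M)" if "0 < c" for c
      using that by (simp add: mult.left_commute)
    moreover have "?y \<bullet> (e2 \<times> e3) = c1 * ?M" "?y \<bullet> (e3 \<times> e1) = c2 * ?M" "?y \<bullet> (e1 \<times> e2) = c3 * ?M"
      by (simp_all add: inner_vec_def sum_3 cross_components algebra_simps)
    ultimately show ?thesis
      using c by (simp add: U_def)
  qed
  ultimately show ?thesis
    using interior_maximal by blast
qed

lemma apex_mem_affine_hull_iff:
  fixes V Q1 Q2 Q3 Q4 :: "real^3"
  assumes "(Q2 - Q1) \<times> (Q3 - Q1) \<noteq> 0" "Q4 = Q1 + u *\<^sub>R (Q2 - Q1) + v *\<^sub>R (Q3 - Q1)"
  shows "V \<in> affine hull {Q1, Q2, Q3, Q4} \<longleftrightarrow> (Q1 - V) \<bullet> ((Q2 - V) \<times> (Q3 - V)) = 0"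
proof -
  let ?n = "(Q2 - Q1) \<times> (Q3 - Q1)"
  have "V \<in> affine hull {Q1, Q2, Q3, Q4} \<longleftrightarrow> ?n \<bullet> V = ?n \<bullet> Q1"
    using affine_hull_4_eq_plane[OF assms] by simp
  also have "\<dots> \<longleftrightarrow> ?n \<bullet> (Q1 - V) = 0"
    by (auto simp: inner_diff_right)
  also have "?n \<bullet> (Q1 - V) = (Q1 - V) \<bullet> ((Q2 - V) \<times> (Q3 - V))"
    by (rule cross_diff_inner_eq_triple)
  finally show ?thesis .
qed

lemma admissible_facet_signs:
  fixes V x e1 e2 e3 e4 :: "real^3"
  assumes e4: "e4 = (1 - u - v) *\<^sub>R e1 + u *\<^sub>R e2 + v *\<^sub>R e3"
    and u: "u < 0" and v: "0 < v" and uv: "u + v < 1"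
    and M: "M = e1 \<bullet> (e2 \<times> e3)" "M \<noteq> 0"
    and x: "x \<in> interior (hedral_angle4 V (V + e1) (V + e2) (V + e3) (V + e4))"
  shows "0 < M * ((e1 \<times> e2) \<bullet> (x - V))" "0 < M * ((e2 \<times> e3) \<bullet> (x - V))"
    "0 < M * ((e3 \<times> e4) \<bullet> (x - V))" "0 < M * ((e4 \<times> e1) \<bullet> (x - V))"
proof -
  have facet: "0 < M * (n \<bullet> (x - V))"
    if "\<forall>e\<in>{e1, e2, e3, e4}. 0 \<le> M * (n \<bullet> e)" "\<exists>e\<in>{e1, e2, e3, e4}. 0 < M * (n \<bullet> e)" for n
  proof -
    have "M *\<^sub>R n \<noteq> 0"
      using that(2) by auto
    moreover have "\<forall>q\<in>{V + e1, V + e2, V + e3, V + e4}. 0 \<le> (M *\<^sub>R n) \<bullet> (q - V)"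
      using that(1) by auto
    ultimately have "0 < (M *\<^sub>R n) \<bullet> (x - V)"
      using x unfolding hedral_angle4_def by (rule inner_pos_interior_ray_cone)
    then show ?thesis
      by simp
  qed
  have MM: "0 < M * M"
    using M(2) not_real_square_gt_zero by blast
  have nonneg: "0 \<le> M * (c * M)" if "0 \<le> c" for c
    using mult_nonneg_nonneg[OF that less_imp_le[OF MM]] by (metis mult.left_commute)
  have pos: "0 < M * (c * M)" if "0 < c" for c
    using mult_pos_pos[OF that MM] by (metis mult.left_commute)
  have coefficients: "0 < v" "0 < - u" "0 < 1 - u - v"
    using u v uv by simp_all
  note inner = cross_consecutive_inner[OF e4 M(1)] orthogonal_cross[unfolded orthogonal_def]
  show "0 < M * ((e1 \<times> e2) \<bullet> (x - V))" "0 < M * ((e2 \<times> e3) \<bullet> (x - V))"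
    "0 < M * ((e3 \<times> e4) \<bullet> (x - V))" "0 < M * ((e4 \<times> e1) \<bullet> (x - V))"
    by (rule facet; use MM coefficients[THEN pos] coefficients[THEN less_imp_le, THEN nonneg]
        in \<open>simp add: inner less_imp_le\<close>)+
qed

section \<open>From the angle to the quadrilateral\<close>

lemma dual_normals_affine_relation:
  fixes e1 e2 e3 e4 a b c d E :: "real^3"
  assumes e4: "e4 = (1 - u - v) *\<^sub>R e1 + u *\<^sub>R e2 + v *\<^sub>R e3"
    and u: "u < 0" and v: "0 < v" and uv: "u + v < 1"
    and M: "e1 \<bullet> (e2 \<times> e3) \<noteq> 0"
    and a: "a \<bullet> e1 = 0" "a \<bullet> e2 = 0" and b: "b \<bullet> e2 = 0" "b \<bullet> e3 = 0"
    and c: "c \<bullet> e3 = 0" "c \<bullet> e4 = 0" and d: "d \<bullet> e4 = 0" "d \<bullet> e1 = 0"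
    and E: "a \<bullet> E = -1" "b \<bullet> E = -1" "c \<bullet> E = -1" "d \<bullet> E = -1"
    and T: "0 < T * ((e1 \<times> e2) \<bullet> E)" "0 < T * ((e2 \<times> e3) \<bullet> E)"
      "0 < T * ((e3 \<times> e4) \<bullet> E)" "0 < T * ((e4 \<times> e1) \<bullet> E)"
  shows "a \<bullet> (b \<times> c) \<noteq> 0"
    and "\<exists>q r. d = (1 - q - r) *\<^sub>R a + q *\<^sub>R b + r *\<^sub>R c \<and> q < 0 \<and> 0 < r \<and> q + r < 1"
proof -
  define p where "p = 1 - u - v"
  have p: "0 < p"
    using uv by (simp add: p_def)
  define s1 s2 s3 s4 where "s1 = (e1 \<times> e2) \<bullet> E" and "s2 = (e2 \<times> e3) \<bullet> E"
    and "s3 = (e3 \<times> e4) \<bullet> E" and "s4 = (e4 \<times> e1) \<bullet> E"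
  have s: "s1 \<noteq> 0" "s2 \<noteq> 0" "s3 \<noteq> 0" "s4 \<noteq> 0"
    using T by (auto simp: s1_def s2_def s3_def s4_def)
  have n: "e1 \<times> e2 = (- s1) *\<^sub>R a" "e2 \<times> e3 = (- s2) *\<^sub>R b"
    "e3 \<times> e4 = (- s3) *\<^sub>R c" "e4 \<times> e1 = (- s4) *\<^sub>R d"
    unfolding s1_def s2_def s3_def s4_def
    by (rule cross_eq_scaleR_if_orthogonal; use s a b c d E in \<open>simp add: s1_def s2_def s3_def s4_def\<close>)+
  have "p *\<^sub>R (e4 \<times> e1) = v *\<^sub>R (e3 \<times> e4) + (u * v) *\<^sub>R (e2 \<times> e3) - (p * u) *\<^sub>R (e1 \<times> e2)"
    by (rule cross_consecutive_relation) (simp add: e4 p_def)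
  then have "(p * s4) *\<^sub>R d = (- (p * u * s1)) *\<^sub>R a + (u * v * s2) *\<^sub>R b + (v * s3) *\<^sub>R c"
    by (simp add: n algebra_simps)
  from arg_cong[OF this, of "scaleR (1 / s4)"]
  have relation: "p *\<^sub>R d = ((p * - u) * (s1 / s4)) *\<^sub>R a + ((u * v) * (s2 / s4)) *\<^sub>R b + (v * (s3 / s4)) *\<^sub>R c"
    using s(4) by (simp add: scaleR_add_right scaleR_diff_right)
  have "0 < s1 / s4" "0 < s2 / s4" "0 < s3 / s4"
    using T by (auto simp: s1_def s2_def s3_def s4_def zero_less_mult_iff zero_less_divide_iff)
  then have "0 < (p * - u) * (s1 / s4)" "(u * v) * (s2 / s4) < 0" "0 < v * (s3 / s4)"
    using p u v by (intro mult_pos_pos mult_neg_pos; simp)+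
  from affine_combination_if_alternating_relation[OF relation this p E]
  show "\<exists>q r. d = (1 - q - r) *\<^sub>R a + q *\<^sub>R b + r *\<^sub>R c \<and> q < 0 \<and> 0 < r \<and> q + r < 1"
    by simp
  have "(e1 \<times> e2) \<bullet> ((e2 \<times> e3) \<times> (e3 \<times> e4)) = (e1 \<bullet> (e2 \<times> e3)) * (p * (e1 \<bullet> (e2 \<times> e3)))"
    using cross_consecutive_triple[of e1 e2 e3 e4] cross_consecutive_inner(6)[OF e4 refl]
    by (simp add: p_def inner_commute)
  moreover have "(e1 \<times> e2) \<bullet> ((e2 \<times> e3) \<times> (e3 \<times> e4)) = - (s1 * s2 * s3) * (a \<bullet> (b \<times> c))"
    by (simp add: n cross_mult_left cross_mult_right)
  ultimately show "a \<bullet> (b \<times> c) \<noteq> 0"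
    using M p by auto
qed

lemma dual_coordinates_of_admissible_hedral_angle:
  fixes A B C D V Q1 Q2 Q3 Q4 :: "real^3"
  assumes quad: "convex_quadrilateral Q1 Q2 Q3 Q4"
    and apex: "V \<notin> affine hull {Q1, Q2, Q3, Q4}"
    and adm: "admissible V (hedral_angle4 V Q1 Q2 Q3 Q4)"
    and flat: "flat_angle V Q1 Q2 \<subseteq> dual_plane A" "flat_angle V Q2 Q3 \<subseteq> dual_plane B"
      "flat_angle V Q3 Q4 \<subseteq> dual_plane C" "flat_angle V Q4 Q1 \<subseteq> dual_plane D"
  shows "((B - A) \<times> (C - A)) $ 3 \<noteq> 0"
    and "\<exists>q r. D = A + q *\<^sub>R (B - A) + r *\<^sub>R (C - A) \<and> q < 0 \<and> 0 < r \<and> q + r < 1"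
proof -
  obtain u v where nQ: "(Q2 - Q1) \<times> (Q3 - Q1) \<noteq> 0"
    and Q4: "Q4 = Q1 + u *\<^sub>R (Q2 - Q1) + v *\<^sub>R (Q3 - Q1)" and uv: "u < 0" "0 < v" "u + v < 1"
    using convex_quadrilateral_coordinates[OF quad] by blast
  define e1 e2 e3 e4 where "e1 = Q1 - V" and "e2 = Q2 - V" and "e3 = Q3 - V" and "e4 = Q4 - V"
  have Q: "Q1 = V + e1" "Q2 = V + e2" "Q3 = V + e3" "Q4 = V + e4"
    by (simp_all add: e1_def e2_def e3_def e4_def)
  have e4: "e4 = (1 - u - v) *\<^sub>R e1 + u *\<^sub>R e2 + v *\<^sub>R e3"
    by (simp add: e1_def e2_def e3_def e4_def Q4 algebra_simps)
  have M: "e1 \<bullet> (e2 \<times> e3) \<noteq> 0"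
    using apex apex_mem_affine_hull_iff[OF nQ Q4] by (simp add: e1_def e2_def e3_def)
  obtain t where "V + t *\<^sub>R isotropic_dir \<in> interior (hedral_angle4 V (V + e1) (V + e2) (V + e3) (V + e4))"
    using adm unfolding admissible_def isotropic_line_def Q by blast
  from admissible_facet_signs[OF e4 uv refl M this]
  have T: "0 < (e1 \<bullet> (e2 \<times> e3) * t) * ((e1 \<times> e2) \<bullet> isotropic_dir)"
    "0 < (e1 \<bullet> (e2 \<times> e3) * t) * ((e2 \<times> e3) \<bullet> isotropic_dir)"
    "0 < (e1 \<bullet> (e2 \<times> e3) * t) * ((e3 \<times> e4) \<bullet> isotropic_dir)"
    "0 < (e1 \<bullet> (e2 \<times> e3) * t) * ((e4 \<times> e1) \<bullet> isotropic_dir)"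
    by (simp_all add: mult.assoc)
  have "V \<in> dual_plane A" "V \<in> dual_plane B" "V \<in> dual_plane C" "V \<in> dual_plane D"
    and orth: "dual_normal A \<bullet> e1 = 0" "dual_normal A \<bullet> e2 = 0" "dual_normal B \<bullet> e2 = 0"
      "dual_normal B \<bullet> e3 = 0" "dual_normal C \<bullet> e3 = 0" "dual_normal C \<bullet> e4 = 0"
      "dual_normal D \<bullet> e4 = 0" "dual_normal D \<bullet> e1 = 0"
    using flat by (simp_all add: flat_angle_subset_dual_plane_iff e1_def e2_def e3_def e4_def)
  moreover note dual_normals_affine_relation[OF e4 uv M orth inner_dual_normal_isotropic_dir
      inner_dual_normal_isotropic_dir inner_dual_normal_isotropic_dir inner_dual_normal_isotropic_dir T]
  ultimately show "((B - A) \<times> (C - A)) $ 3 \<noteq> 0"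
    and "\<exists>q r. D = A + q *\<^sub>R (B - A) + r *\<^sub>R (C - A) \<and> q < 0 \<and> 0 < r \<and> q + r < 1"
    by (simp_all add: cross_diff_nth_3_eq_dual_normal_triple affine_combination_iff_dual_normal)
qed

section \<open>From the quadrilateral to the angle\<close>

text \<open>The edge lines of the angle are the intersections of consecutive dual planes, so the
  edges are multiples of cross products of consecutive dual normals.  The scalings below make
  \<open>V + e1, \<dots>, V + e4\<close> a trapezoid, with \<open>e4 - e3\<close> a negative multiple of \<open>e2 - e1\<close>,
  whose cone contains the isotropic direction.\<close>

lemma cone_edges_of_dual_normals:
  fixes a b c d E e1 e2 e3 e4 :: "real^3"
  assumes m: "a \<bullet> (b \<times> c) \<noteq> 0" and d: "d = (1 - q - r) *\<^sub>R a + q *\<^sub>R b + r *\<^sub>R c"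
    and q: "q < 0" and r: "0 < r" and E: "a \<bullet> E = -1" "b \<bullet> E = -1" "c \<bullet> E = -1"
    and e1: "e1 = (1 / (q * (a \<bullet> (b \<times> c)))) *\<^sub>R (d \<times> a)"
    and e2: "e2 = (- 1 / (a \<bullet> (b \<times> c))) *\<^sub>R (a \<times> b)"
    and e3: "e3 = (- 1 / (a \<bullet> (b \<times> c))) *\<^sub>R (b \<times> c)"
    and e4: "e4 = (1 / (q * (a \<bullet> (b \<times> c)))) *\<^sub>R (c \<times> d)"
  shows "e4 = e3 + (- ((1 - q - r) / r)) *\<^sub>R (e2 - e1)"
    and "e1 \<bullet> (e2 \<times> e3) \<noteq> 0"
    and "\<exists>s. 0 < s \<and> s < 1 \<and> E = s *\<^sub>R e1 + (1 - s) *\<^sub>R e2 + (1 - s) *\<^sub>R e3 + s *\<^sub>R e4"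
proof -
  define m where "m = a \<bullet> (b \<times> c)"
  define p where "p = 1 - q - r"
  have "p *\<^sub>R (d \<times> a) = r *\<^sub>R (c \<times> d) + (q * r) *\<^sub>R (b \<times> c) - (p * q) *\<^sub>R (a \<times> b)"
    by (rule cross_consecutive_relation) (simp add: d p_def)
  then have cd: "(c \<times> d) $ i = (p * (d \<times> a) $ i + (p * q) * (a \<times> b) $ i - (q * r) * (b \<times> c) $ i) / r" for i
    using r by (simp add: vec_eq_iff field_simps)
  show "e4 = e3 + (- ((1 - q - r) / r)) *\<^sub>R (e2 - e1)"
    unfolding vec_eq_iff using q r m by (simp add: e1 e2 e3 e4 cd p_def field_simps)
  have "(d \<times> a) \<bullet> ((a \<times> b) \<times> (b \<times> c)) = (d \<bullet> (a \<times> b)) * m"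
    unfolding m_def by (rule cross_consecutive_triple)
  moreover have "d \<bullet> (a \<times> b) = r * m"
    by (simp add: d m_def inner_vec_def sum_3 cross_components algebra_simps)
  ultimately have "(d \<times> a) \<bullet> ((a \<times> b) \<times> (b \<times> c)) \<noteq> 0"
    using r m by (simp add: m_def)
  then show "e1 \<bullet> (e2 \<times> e3) \<noteq> 0"
    using q m by (simp add: e1 e2 e3 cross_mult_left cross_mult_right)
  have table: "a \<bullet> (c \<times> d) = - q * m" "b \<bullet> (d \<times> a) = r * m"
    "b \<bullet> (c \<times> d) = p * m" "c \<bullet> (d \<times> a) = - q * m" "c \<bullet> (a \<times> b) = m"
    by (simp_all add: d m_def p_def inner_vec_def sum_3 cross_components algebra_simps)
  have inner: "a \<bullet> e1 = 0" "a \<bullet> e2 = 0" "a \<bullet> e3 = -1" "a \<bullet> e4 = -1"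
    "b \<bullet> e1 = r / q" "b \<bullet> e2 = 0" "b \<bullet> e3 = 0" "b \<bullet> e4 = p / q"
    "c \<bullet> e1 = -1" "c \<bullet> e2 = -1" "c \<bullet> e3 = 0" "c \<bullet> e4 = 0"
    using q m by (simp_all add: e1 e2 e3 e4 table dot_cross_self flip: m_def)
  define s where "s = - q / (1 - q)"
  have "r / (1 - q) + p / (1 - q) = 1"
    using q by (simp add: p_def flip: add_divide_distrib)
  then have "s * (r / q) + s * (p / q) = -1"
    using q by (simp add: s_def)
  then have combination: "E = s *\<^sub>R e1 + (1 - s) *\<^sub>R e2 + (1 - s) *\<^sub>R e3 + s *\<^sub>R e4"
    using E inner by (intro eq_if_inner_eq_basis[OF m]) (simp_all add: inner_add_right algebra_simps)
  have "0 < 1 - q"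
    using q by simp
  then have "0 < s" "s < 1"
    using q by (simp_all add: s_def field_simps)
  with combination show "\<exists>s. 0 < s \<and> s < 1 \<and> E = s *\<^sub>R e1 + (1 - s) *\<^sub>R e2 + (1 - s) *\<^sub>R e3 + s *\<^sub>R e4"
    by blast
qed

lemma hedral_angle_of_edges:
  fixes V e1 e2 e3 e4 :: "real^3"
  assumes e4: "e4 = e3 + u *\<^sub>R (e2 - e1)" and u: "u < 0" and M: "e1 \<bullet> (e2 \<times> e3) \<noteq> 0"
    and E: "isotropic_dir = s *\<^sub>R e1 + (1 - s) *\<^sub>R e2 + (1 - s) *\<^sub>R e3 + s *\<^sub>R e4"
    and s: "0 < s" "s < 1"
  shows "convex_quadrilateral (V + e1) (V + e2) (V + e3) (V + e4)"
    and "V \<notin> affine hull {V + e1, V + e2, V + e3, V + e4}"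
    and "admissible V (hedral_angle4 V (V + e1) (V + e2) (V + e3) (V + e4))"
proof -
  have Q4: "V + e4 = (V + e1) + u *\<^sub>R ((V + e2) - (V + e1)) + 1 *\<^sub>R ((V + e3) - (V + e1))"
    by (simp add: e4 algebra_simps)
  have triple: "((V + e1) - V) \<bullet> (((V + e2) - V) \<times> ((V + e3) - V)) \<noteq> 0"
    using M by simp
  then have nQ: "((V + e2) - (V + e1)) \<times> ((V + e3) - (V + e1)) \<noteq> 0"
    by (metis cross_diff_inner_eq_triple inner_zero_left)
  show "convex_quadrilateral (V + e1) (V + e2) (V + e3) (V + e4)"
    using convex_quadrilateral_if_coordinates[OF nQ Q4 u] u by simp
  show "V \<notin> affine hull {V + e1, V + e2, V + e3, V + e4}"
    using apex_mem_affine_hull_iff[OF nQ Q4] triple by blast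
  have "V + 1 *\<^sub>R isotropic_dir \<in> interior (hedral_angle4 V (V + e1) (V + e2) (V + e3) (V + e4))"
    using combination_mem_interior_hedral_angle4[OF M, of s "1 - s" "1 - s" s V] s
    by (simp add: E add.assoc)
  moreover have "V + 1 *\<^sub>R isotropic_dir \<in> isotropic_line V"
    unfolding isotropic_line_def by blast
  ultimately show "admissible V (hedral_angle4 V (V + e1) (V + e2) (V + e3) (V + e4))"
    unfolding admissible_def by blast
qed

lemma admissible_hedral_angle_of_dual_coordinates:
  fixes A B C D :: "real^3"
  assumes det: "((B - A) \<times> (C - A)) $ 3 \<noteq> 0" and D: "D = A + q *\<^sub>R (B - A) + r *\<^sub>R (C - A)"
    and q: "q < 0" and r: "0 < r" and qr: "q + r < 1"
  shows "\<exists>V Q1 Q2 Q3 Q4.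
            convex_quadrilateral Q1 Q2 Q3 Q4 \<and>
            V \<notin> affine hull {Q1, Q2, Q3, Q4} \<and>
            admissible V (hedral_angle4 V Q1 Q2 Q3 Q4) \<and>
            flat_angle V Q1 Q2 \<subseteq> dual_plane A \<and>
            flat_angle V Q2 Q3 \<subseteq> dual_plane B \<and>
            flat_angle V Q3 Q4 \<subseteq> dual_plane C \<and>
            flat_angle V Q4 Q1 \<subseteq> dual_plane D"
proof -
  let ?a = "dual_normal A" and ?b = "dual_normal B" and ?c = "dual_normal C" and ?d = "dual_normal D"
  have m: "?a \<bullet> (?b \<times> ?c) \<noteq> 0"
    using det by (simp add: cross_diff_nth_3_eq_dual_normal_triple)
  obtain V where "?a \<bullet> V = A $ 3" "?b \<bullet> V = B $ 3" "?c \<bullet> V = C $ 3"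
    using exists_inner_eq_3[OF m] by blast
  then have V: "V \<in> dual_plane A" "V \<in> dual_plane B" "V \<in> dual_plane C"
    by (simp_all add: dual_plane_eq)
  then have d: "?d = (1 - q - r) *\<^sub>R ?a + q *\<^sub>R ?b + r *\<^sub>R ?c" and VD: "V \<in> dual_plane D"
    using affine_combination_iff_dual_normal D by blast+
  define e1 e2 e3 e4
    where "e1 = (1 / (q * (?a \<bullet> (?b \<times> ?c)))) *\<^sub>R (?d \<times> ?a)"
      and "e2 = (- 1 / (?a \<bullet> (?b \<times> ?c))) *\<^sub>R (?a \<times> ?b)"
      and "e3 = (- 1 / (?a \<bullet> (?b \<times> ?c))) *\<^sub>R (?b \<times> ?c)"
      and "e4 = (1 / (q * (?a \<bullet> (?b \<times> ?c)))) *\<^sub>R (?c \<times> ?d)"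
  note edges = cone_edges_of_dual_normals[OF m d q r inner_dual_normal_isotropic_dir
      inner_dual_normal_isotropic_dir inner_dual_normal_isotropic_dir e1_def e2_def e3_def e4_def]
  obtain s where E: "isotropic_dir = s *\<^sub>R e1 + (1 - s) *\<^sub>R e2 + (1 - s) *\<^sub>R e3 + s *\<^sub>R e4"
    and s: "0 < s" "s < 1"
    using edges(3) by blast
  have "- ((1 - q - r) / r) < 0"
    using r qr by simp
  note angle = hedral_angle_of_edges[OF edges(1) this edges(2) E s, of V]
  have "?a \<bullet> e1 = 0" "?a \<bullet> e2 = 0" "?b \<bullet> e2 = 0" "?b \<bullet> e3 = 0"
    "?c \<bullet> e3 = 0" "?c \<bullet> e4 = 0" "?d \<bullet> e4 = 0" "?d \<bullet> e1 = 0"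
    by (simp_all add: e1_def e2_def e3_def e4_def dot_cross_self)
  with angle V VD show ?thesis
    by (intro exI[of _ V] exI[of _ "V + e1"] exI[of _ "V + e2"] exI[of _ "V + e3"] exI[of _ "V + e4"])
      (simp add: flat_angle_subset_dual_plane_iff)
qed

theorem lemma1:
  fixes A B C D :: "real^3"
  shows "(convex_quadrilateral A B C D \<and>
          \<not> (\<exists>P. isotropic_plane P \<and> {A, B, C, D} \<subseteq> P))
     \<longleftrightarrow>
         (\<exists>V Q1 Q2 Q3 Q4.
            convex_quadrilateral Q1 Q2 Q3 Q4 \<and>
            V \<notin> affine hull {Q1, Q2, Q3, Q4} \<and>
            admissible V (hedral_angle4 V Q1 Q2 Q3 Q4) \<and>
            flat_angle V Q1 Q2 \<subseteq> dual_plane A \<and>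
            flat_angle V Q2 Q3 \<subseteq> dual_plane B \<and>
            flat_angle V Q3 Q4 \<subseteq> dual_plane C \<and>
            flat_angle V Q4 Q1 \<subseteq> dual_plane D)"
    (is "?quadrilateral \<longleftrightarrow> ?hedral_angle")
proof
  assume ?quadrilateral
  then obtain u v where n: "(B - A) \<times> (C - A) \<noteq> 0"
    and D: "D = A + u *\<^sub>R (B - A) + v *\<^sub>R (C - A)" and uv: "u < 0" "0 < v" "u + v < 1"
    using convex_quadrilateral_coordinates by blast
  with \<open>?quadrilateral\<close> have "((B - A) \<times> (C - A)) $ 3 \<noteq> 0"
    using ex_isotropic_plane_superset_iff by blast
  then show ?hedral_angle
    using admissible_hedral_angle_of_dual_coordinates[OF _ D uv] by blast
next
  assume ?hedral_angle
  then obtain q r where det: "((B - A) \<times> (C - A)) $ 3 \<noteq> 0"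
    and D: "D = A + q *\<^sub>R (B - A) + r *\<^sub>R (C - A)" and qr: "q < 0" "0 < r" "q + r < 1"
    using dual_coordinates_of_admissible_hedral_angle by metis
  then have n: "(B - A) \<times> (C - A) \<noteq> 0"
    by auto
  show ?quadrilateral
    using convex_quadrilateral_if_coordinates[OF n D qr] ex_isotropic_plane_superset_iff[OF n D] det
    by blast
qed

end
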